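(* Let $\mathscr{H}$ be a complex Hilbert space and let $N(\cdot)$ be a norm on $\mathbb{B}(\mathscr{H})$ which is an algebra norm ($N(XY)\leq N(X)N(Y)$ for all $X,Y$) and self-adjoint ($N(X^* )=N(X)$ for all $X$). Then for all self-adjoint $B,C\in\mathbb{B}(\mathscr{H})$, $$\frac18N(C^2+B^2)+\frac12\max\{N(B),N(C)\}\,|N(B+C)-N(B-C)|\leq w_{(N,e)}^2(B,C).$$
   Context: For $T\in\mathbb{B}(\mathscr{H})$, $\Re(T)=\frac12(T+T^* )$. For $B,C\in\mathbb{B}(\mathscr{H})$, $w_{(N,e)}(B,C)=\sup_{\lambda_1,\lambda_2\in\mathbb{C},\ |\lambda_1|^2+|\lambda_2|^2\leq 1}\sup_{\theta\in\mathbb{R}} N(\Re(e^{i\theta}(\lambda_1B+\lambda_2C)))$. *)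

theory Defs
  imports "HOL-Analysis.Analysis"
begin

text \<open>HOL-Analysis only provides real inner product spaces, so we introduce complex
pre-Hilbert spaces as a type class: a real normed vector space with a compatible
complex scalar multiplication and a complex inner product (linear in the second
argument, conjugate-symmetric) inducing the norm.\<close>

class complex_inner = real_normed_vector +
  fixes scaleC :: "complex \<Rightarrow> 'a \<Rightarrow> 'a"
    and cinner :: "'a \<Rightarrow> 'a \<Rightarrow> complex"
  assumes scaleC_add_right: "scaleC a (x + y) = scaleC a x + scaleC a y"
    and scaleC_add_left: "scaleC (a + b) x = scaleC a x + scaleC b x"
    and scaleC_scaleC: "scaleC a (scaleC b x) = scaleC (a * b) x"
    and scaleC_one: "scaleC 1 x = x"
    and scaleR_scaleC: "scaleR r x = scaleC (complex_of_real r) x"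
    and cinner_commute: "cinner x y = cnj (cinner y x)"
    and cinner_add_right: "cinner x (y + z) = cinner x y + cinner x z"
    and cinner_scaleC_right: "cinner x (scaleC a y) = a * cinner x y"
    and norm_eq_sqrt_cinner: "norm x = sqrt (Re (cinner x x))"

class chilbert_space = complex_inner + complete_space

text \<open>Non-vacuity: the complex numbers form a complex Hilbert space.\<close>

instantiation complex :: complex_inner
begin
definition scaleC_complex_def: "scaleC a (x::complex) = a * x"
definition cinner_complex_def: "cinner (x::complex) y = cnj x * y"
instance
proof
  fix x y z a b :: complex and r :: real
  show "scaleC a (x + y) = scaleC a x + scaleC a y" by (simp add: scaleC_complex_def algebra_simps)
  show "scaleC (a + b) x = scaleC a x + scaleC b x" by (simp add: scaleC_complex_def algebra_simps)
  show "scaleC a (scaleC b x) = scaleC (a * b) x" by (simp add: scaleC_complex_def algebra_simps)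
  show "scaleC 1 x = x" by (simp add: scaleC_complex_def)
  show "scaleR r x = scaleC (complex_of_real r) x" by (simp add: scaleC_complex_def scaleR_conv_of_real)
  show "cinner x y = cnj (cinner y x)" by (simp add: cinner_complex_def)
  show "cinner x (y + z) = cinner x y + cinner x z" by (simp add: cinner_complex_def algebra_simps)
  show "cinner x (scaleC a y) = a * cinner x y" by (simp add: cinner_complex_def scaleC_complex_def algebra_simps)
  show "norm x = sqrt (Re (cinner x x))"
    by (simp add: cinner_complex_def complex_mult_cnj cmod_def power2_eq_square)
qed
end

instance complex :: chilbert_space ..

definition bounded_op :: "('a::complex_inner \<Rightarrow> 'a) \<Rightarrow> bool" where
  "bounded_op T \<longleftrightarrow>
     (\<forall>x y. T (x + y) = T x + T y) \<and> (\<forall>a x. T (scaleC a x) = scaleC a (T x)) \<and>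
     (\<exists>K. \<forall>x. norm (T x) \<le> norm x * K)"

definition cadjoint :: "('a::complex_inner \<Rightarrow> 'a) \<Rightarrow> ('a \<Rightarrow> 'a)" where
  "cadjoint T = (SOME S. \<forall>x y. cinner (T x) y = cinner x (S y))"

definition op_add :: "('a::complex_inner \<Rightarrow> 'a) \<Rightarrow> ('a \<Rightarrow> 'a) \<Rightarrow> ('a \<Rightarrow> 'a)" where
  "op_add S T = (\<lambda>x. S x + T x)"

definition op_diff :: "('a::complex_inner \<Rightarrow> 'a) \<Rightarrow> ('a \<Rightarrow> 'a) \<Rightarrow> ('a \<Rightarrow> 'a)" where
  "op_diff S T = (\<lambda>x. S x - T x)"

definition op_scale :: "complex \<Rightarrow> ('a::complex_inner \<Rightarrow> 'a) \<Rightarrow> ('a \<Rightarrow> 'a)" where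
  "op_scale a T = (\<lambda>x. scaleC a (T x))"

definition op_Re :: "('a::complex_inner \<Rightarrow> 'a) \<Rightarrow> ('a \<Rightarrow> 'a)" where
  "op_Re T = op_scale (1/2) (op_add T (cadjoint T))"

definition is_op_norm :: "(('a::complex_inner \<Rightarrow> 'a) \<Rightarrow> real) \<Rightarrow> bool" where
  "is_op_norm N \<longleftrightarrow>
     (\<forall>T. bounded_op T \<longrightarrow> N T \<ge> 0) \<and>
     (\<forall>T. bounded_op T \<longrightarrow> (N T = 0 \<longleftrightarrow> T = (\<lambda>x. 0))) \<and>
     (\<forall>S T. bounded_op S \<longrightarrow> bounded_op T \<longrightarrow> N (op_add S T) \<le> N S + N T) \<and>
     (\<forall>a T. bounded_op T \<longrightarrow> N (op_scale a T) = cmod a * N T)"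

definition is_algebra_norm :: "(('a::complex_inner \<Rightarrow> 'a) \<Rightarrow> real) \<Rightarrow> bool" where
  "is_algebra_norm N \<longleftrightarrow>
     (\<forall>S T. bounded_op S \<longrightarrow> bounded_op T \<longrightarrow> N (S \<circ> T) \<le> N S * N T)"

definition is_selfadjoint_norm :: "(('a::complex_inner \<Rightarrow> 'a) \<Rightarrow> real) \<Rightarrow> bool" where
  "is_selfadjoint_norm N \<longleftrightarrow> (\<forall>T. bounded_op T \<longrightarrow> N (cadjoint T) = N T)"

definition selfadjoint_op :: "('a::complex_inner \<Rightarrow> 'a) \<Rightarrow> bool" where
  "selfadjoint_op T \<longleftrightarrow> cadjoint T = T"

definition w_Ne :: "(('a::complex_inner \<Rightarrow> 'a) \<Rightarrow> real) \<Rightarrow> ('a \<Rightarrow> 'a) \<Rightarrow> ('a \<Rightarrow> 'a) \<Rightarrow> real" where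
  "w_Ne N B C =
     (SUP l \<in> {(l1, l2). (cmod l1)\<^sup>2 + (cmod l2)\<^sup>2 \<le> 1}.
        SUP \<theta> \<in> (UNIV :: real set).
          N (op_Re (op_scale (exp (\<i> * complex_of_real \<theta>))
                 (op_add (op_scale (fst l) B) (op_scale (snd l) C)))))"

end

theory Submission
  imports Defs
begin

text \<open>For self-adjoint \<open>B\<close>, \<open>C\<close> and real \<open>p\<close>, \<open>q\<close> with \<open>p\<^sup>2 + q\<^sup>2 \<le> 1\<close>, the real part of
  \<open>p B + q C\<close> is the operator itself, so w = w_(N,e)(B, C) dominates \<open>N(B)\<close>, \<open>N(C)\<close> and
  \<open>N(B \<plusminus> C) / \<surd>2\<close>. Submultiplicativity gives \<open>N(C\<^sup>2 + B\<^sup>2) \<le> N(C)\<^sup>2 + N(B)\<^sup>2 \<le> 2 w\<^sup>2\<close>,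
  and \<open>|N(B + C) - N(B - C)| \<le> \<surd>2 w\<close>, so the left-hand side is at most
  \<open>w\<^sup>2/4 + (\<surd>2/2) w\<^sup>2 \<le> w\<^sup>2\<close>.

  Since \<open>cadjoint\<close> is defined by Hilbert choice, \<open>cadjoint B = B\<close> makes \<open>B\<close> symmetric only once
  some adjoint of \<open>B\<close> is known to exist. This is where completeness enters: adjoints come from
  the Riesz representation theorem, which rests on the vector of minimal norm in a closed convex
  set.\<close>

lemma linear_scaleC_right: "linear (scaleC a :: 'a::complex_inner \<Rightarrow> 'a)"
  by (rule linearI) (simp_all add: scaleC_add_right scaleR_scaleC scaleC_scaleC mult.commute)

lemma linear_scaleC_left: "linear (\<lambda>a. scaleC a (x::'a::complex_inner))"
  by (rule linearI) (simp_all add: scaleC_add_left scaleR_scaleC scaleC_scaleC scaleC_complex_def)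

lemma linear_cinner_right: "linear (cinner (x::'a::complex_inner))"
  by (rule linearI) (simp_all add: cinner_add_right scaleR_scaleC cinner_scaleC_right scaleC_complex_def)

lemma scaleC_zero_left [simp]: "scaleC 0 (x::'a::complex_inner) = 0"
  using linear_0[OF linear_scaleC_left] .

lemma cinner_add_left: "cinner ((x::'a::complex_inner) + y) z = cinner x z + cinner y z"
  by (metis cinner_commute cinner_add_right complex_cnj_add)

lemma cinner_scaleC_left: "cinner (scaleC a (x::'a::complex_inner)) y = cnj a * cinner x y"
  by (metis cinner_commute cinner_scaleC_right complex_cnj_mult)

lemma cinner_zero_left [simp]: "cinner 0 (x::'a::complex_inner) = 0"
  using cinner_scaleC_left[of 0 0 x] by simp

lemma cinner_self: "cinner (x::'a::complex_inner) x = complex_of_real ((norm x)\<^sup>2)"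
proof -
  have "Im (cinner x x) = 0"
    using cinner_commute[of x x] by (metis cnj.sel(2) neg_equal_zero)
  moreover have "Re (cinner x x) = (norm x)\<^sup>2"
    using norm_eq_sqrt_cinner[of x] by (metis norm_ge_zero real_sqrt_ge_0_iff real_sqrt_pow2)
  ultimately show ?thesis by (simp add: complex_eq_iff)
qed

lemma norm_scaleC: "norm (scaleC a (x::'a::complex_inner)) = cmod a * norm x"
proof -
  have "complex_of_real ((norm (scaleC a x))\<^sup>2) = cnj a * a * complex_of_real ((norm x)\<^sup>2)"
    by (metis cinner_self cinner_scaleC_left cinner_scaleC_right mult.assoc)
  also have "cnj a * a = complex_of_real ((cmod a)\<^sup>2)"
    by (metis complex_norm_square mult.commute)
  finally have "(norm (scaleC a x))\<^sup>2 = (cmod a * norm x)\<^sup>2"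
    by (metis of_real_eq_iff of_real_mult power_mult_distrib)
  then show ?thesis by simp
qed

lemma bounded_linear_scaleC_right: "bounded_linear (scaleC a :: 'a::complex_inner \<Rightarrow> 'a)"
  by (rule bounded_linear_intro[where K = "cmod a"])
    (simp_all add: linear_add[OF linear_scaleC_right] linear_scale[OF linear_scaleC_right] norm_scaleC)

lemma power2_norm_add:
  "(norm ((x::'a::complex_inner) + y))\<^sup>2 = (norm x)\<^sup>2 + 2 * Re (cinner x y) + (norm y)\<^sup>2"
proof -
  have "complex_of_real ((norm (x + y))\<^sup>2) = cinner (x + y) (x + y)"
    by (rule cinner_self[symmetric])
  also have "\<dots> = cinner x x + cinner x y + cinner y x + cinner y y"
    by (simp add: cinner_add_left cinner_add_right)
  finally have "(norm (x + y))\<^sup>2 = Re (cinner x x + cinner x y + cinner y x + cinner y y)"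
    by (metis Re_complex_of_real)
  then show ?thesis
    using cinner_commute[of y x] by (simp add: cinner_self)
qed

lemma parallelogram_law:
  "(norm ((x::'a::complex_inner) + y))\<^sup>2 + (norm (x - y))\<^sup>2 = 2 * (norm x)\<^sup>2 + 2 * (norm y)\<^sup>2"
  using power2_norm_add[of x y] power2_norm_add[of x "- y"]
  by (simp add: linear_neg[OF linear_cinner_right])

text \<open>Moving \<open>z\<close> along \<open>m\<close> to the point closest to the origin lowers \<open>\<parallel>z\<parallel>\<^sup>2\<close> by \<open>|\<langle>z, m\<rangle>|\<^sup>2 / \<parallel>m\<parallel>\<^sup>2\<close>;
  both Cauchy-Schwarz and the orthogonality of minimal vectors come from this identity.\<close>
lemma power2_norm_add_scaleC_projection:
  fixes z m :: "'a::complex_inner"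
  assumes "m \<noteq> 0"
  shows "(norm (z + scaleC (- cnj (cinner z m) / complex_of_real ((norm m)\<^sup>2)) m))\<^sup>2
         = (norm z)\<^sup>2 - (cmod (cinner z m))\<^sup>2 / (norm m)\<^sup>2"
proof -
  define c where "c = cinner z m"
  define t where "t = - cnj c / complex_of_real ((norm m)\<^sup>2)"
  have "cnj c * c = complex_of_real ((cmod c)\<^sup>2)"
    by (metis complex_norm_square mult.commute)
  then have "Re (t * c) = - (cmod c)\<^sup>2 / (norm m)\<^sup>2"
    by (simp add: t_def mult.commute)
  moreover have "cmod t = cmod c / (norm m)\<^sup>2"
    by (simp add: t_def norm_divide norm_power)
  then have "(cmod t * norm m)\<^sup>2 = (cmod c)\<^sup>2 / (norm m)\<^sup>2"
    using assms by (simp add: power2_eq_square)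
  moreover have "(norm (z + scaleC t m))\<^sup>2 = (norm z)\<^sup>2 + 2 * Re (t * c) + (cmod t * norm m)\<^sup>2"
    by (simp add: power2_norm_add norm_scaleC cinner_scaleC_right c_def)
  ultimately show ?thesis
    unfolding c_def[symmetric] t_def[symmetric] by simp
qed

lemma Cauchy_Schwarz_cinner: "cmod (cinner (x::'a::complex_inner) y) \<le> norm x * norm y"
proof (cases "y = 0")
  case True
  then show ?thesis by (simp add: linear_0[OF linear_cinner_right])
next
  case False
  then have "0 \<le> (norm x)\<^sup>2 - (cmod (cinner x y))\<^sup>2 / (norm y)\<^sup>2"
    by (metis power2_norm_add_scaleC_projection zero_le_power2)
  with False have "(cmod (cinner x y))\<^sup>2 \<le> (norm x * norm y)\<^sup>2"
    by (simp add: field_simps)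
  then show ?thesis by (rule power2_le_imp_le) simp
qed

lemma bounded_linear_cinner_right: "bounded_linear (cinner (y::'a::complex_inner))"
  by (rule bounded_linear_intro[where K = "norm y"])
    (simp_all add: linear_add[OF linear_cinner_right] linear_scale[OF linear_cinner_right],
      metis Cauchy_Schwarz_cinner mult.commute)

lemma cinner_eq_zero_if_norm_minimal:
  fixes z m :: "'a::complex_inner"
  assumes "\<And>t. norm z \<le> norm (z + scaleC t m)"
  shows "cinner z m = 0"
proof (rule ccontr)
  assume nonzero: "cinner z m \<noteq> 0"
  then have "m \<noteq> 0" by (auto simp: linear_0[OF linear_cinner_right])
  have "(norm z)\<^sup>2 \<le> (norm z)\<^sup>2 - (cmod (cinner z m))\<^sup>2 / (norm m)\<^sup>2"
    using power_mono[OF assms norm_ge_zero, of 2] power2_norm_add_scaleC_projection[OF \<open>m \<noteq> 0\<close>]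
    by metis
  with \<open>m \<noteq> 0\<close> nonzero show False
    by (simp add: divide_le_0_iff)
qed

lemma power2_norm_diff_le_if_convex:
  fixes x y :: "'a::complex_inner"
  assumes "convex A" "x \<in> A" "y \<in> A" "0 \<le> d" "\<And>v. v \<in> A \<Longrightarrow> d \<le> norm v"
  shows "(norm (x - y))\<^sup>2 \<le> 2 * ((norm x)\<^sup>2 - d\<^sup>2) + 2 * ((norm y)\<^sup>2 - d\<^sup>2)"
proof -
  have "(1/2) *\<^sub>R x + (1/2) *\<^sub>R y \<in> A"
    using assms by (intro convexD) auto
  then have "2 * d \<le> norm (x + y)"
    using assms(5) by (fastforce simp: scaleR_add_right[symmetric])
  then have "(2 * d)\<^sup>2 \<le> (norm (x + y))\<^sup>2"
    using assms(4) by (intro power_mono) auto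
  then show ?thesis
    using parallelogram_law[of x y] by (simp add: power_mult_distrib)
qed

lemma Cauchy_minimizing_sequence_convex:
  fixes X :: "nat \<Rightarrow> 'a::complex_inner"
  assumes "convex A" "\<And>n. X n \<in> A" "\<And>v. v \<in> A \<Longrightarrow> d \<le> norm v"
    and "(\<lambda>n. norm (X n)) \<longlonglongrightarrow> d"
  shows "Cauchy X"
proof (rule metric_CauchyI)
  fix e :: real
  assume "e > 0"
  have "0 \<le> d"
    using assms(4) by (rule LIMSEQ_le_const) simp
  have "(\<lambda>n. (norm (X n))\<^sup>2 - d\<^sup>2) \<longlonglongrightarrow> d\<^sup>2 - d\<^sup>2"
    using assms(4) by (intro tendsto_intros)
  then have "eventually (\<lambda>n. (norm (X n))\<^sup>2 - d\<^sup>2 < e\<^sup>2 / 4) sequentially"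
    using \<open>e > 0\<close> by (intro order_tendstoD) auto
  then obtain M where M: "\<And>n. n \<ge> M \<Longrightarrow> (norm (X n))\<^sup>2 - d\<^sup>2 < e\<^sup>2 / 4"
    unfolding eventually_sequentially by blast
  have "dist (X m) (X n) < e" if "m \<ge> M" "n \<ge> M" for m n
  proof -
    have "(norm (X m - X n))\<^sup>2 \<le> 2 * ((norm (X m))\<^sup>2 - d\<^sup>2) + 2 * ((norm (X n))\<^sup>2 - d\<^sup>2)"
      by (rule power2_norm_diff_le_if_convex) (use assms \<open>0 \<le> d\<close> in auto)
    then have "(norm (X m - X n))\<^sup>2 < e\<^sup>2"
      using M[OF that(1)] M[OF that(2)] by argo
    then have "norm (X m - X n) < e"
      by (rule power_less_imp_less_base) (use \<open>e > 0\<close> in simp)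
    then show ?thesis
      by (simp add: dist_norm)
  qed
  then show "\<exists>M. \<forall>m\<ge>M. \<forall>n\<ge>M. dist (X m) (X n) < e" by blast
qed

lemma exists_min_norm_closed_convex:
  fixes A :: "'a::chilbert_space set"
  assumes "closed A" "convex A" "A \<noteq> {}"
  obtains z where "z \<in> A" "\<And>x. x \<in> A \<Longrightarrow> norm z \<le> norm x"
proof -
  define d where "d = Inf (norm ` A)"
  have bdd: "bdd_below (norm ` A)" by (rule bdd_belowI[of _ 0]) auto
  have d_le: "d \<le> norm x" if "x \<in> A" for x
    unfolding d_def using bdd that by (simp add: cInf_lower)
  have "d \<in> closure (norm ` A)"
    unfolding d_def using assms(3) bdd by (intro closure_contains_Inf) auto
  then obtain X where X: "\<And>n. X n \<in> A" and lim_norm: "(\<lambda>n. norm (X n)) \<longlonglongrightarrow> d"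
  proof -
    obtain Y where Y: "\<And>n. Y n \<in> norm ` A" "Y \<longlonglongrightarrow> d"
      using \<open>d \<in> closure (norm ` A)\<close> unfolding closure_sequential by blast
    then have "\<forall>n. \<exists>x. x \<in> A \<and> Y n = norm x" by blast
    then obtain X where "\<And>n. X n \<in> A" "Y = (\<lambda>n. norm (X n))" by metis
    then show ?thesis
      using that Y(2) by blast
  qed
  have "Cauchy X"
    using assms(2) X d_le lim_norm by (rule Cauchy_minimizing_sequence_convex)
  then obtain z where lim: "X \<longlonglongrightarrow> z"
    using Cauchy_convergent convergent_def by blast
  have "z \<in> A"
    using assms(1) X lim closed_sequentially by blast
  moreover have "norm z = d"
    using lim_norm tendsto_norm[OF lim] LIMSEQ_unique by blast
  ultimately show ?thesis
    using that d_le by auto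
qed

lemma Riesz_representation_cinner:
  fixes f :: "'a::chilbert_space \<Rightarrow> complex"
  assumes "bounded_linear f" and f_scaleC: "\<And>a x. f (scaleC a x) = a * f x"
  obtains w where "\<And>x. f x = cinner w x"
proof (cases "\<forall>x. f x = 0")
  case True
  then show ?thesis using that[of 0] by simp
next
  case False
  interpret f: bounded_linear f by fact
  obtain x1 where "f x1 \<noteq> 0" using False by blast
  define A where "A = {x. f x = 1}"
  have "closed A"
    unfolding A_def by (intro closed_Collect_eq continuous_intros f.continuous_on)
  moreover have "convex A"
    unfolding A_def by (rule convexI) (simp add: f.add f.scale flip: scaleR_add_left)
  moreover have "scaleC (1 / f x1) x1 \<in> A"
    using \<open>f x1 \<noteq> 0\<close> by (simp add: A_def f_scaleC)
  ultimately obtain z where "z \<in> A" and z_min: "\<And>x. x \<in> A \<Longrightarrow> norm z \<le> norm x"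
    by (metis exists_min_norm_closed_convex empty_iff)
  then have "f z = 1" by (simp add: A_def)
  have "cinner z x = f x * complex_of_real ((norm z)\<^sup>2)" for x
  proof -
    \<comment> \<open>\<open>x - f x z\<close> lies in the kernel of \<open>f\<close>, to which the minimal \<open>z\<close> is orthogonal\<close>
    have "cinner z (x - scaleC (f x) z) = 0"
      using \<open>f z = 1\<close> by (intro cinner_eq_zero_if_norm_minimal z_min) (simp add: A_def f.add f.diff f_scaleC)
    then show ?thesis
      by (simp add: linear_diff[OF linear_cinner_right] cinner_scaleC_right cinner_self)
  qed
  moreover have "z \<noteq> 0"
    using \<open>f z = 1\<close> f.zero by auto
  ultimately show ?thesis
    using that[of "scaleC (complex_of_real (1 / (norm z)\<^sup>2)) z"] by (simp add: cinner_scaleC_left)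
qed

lemma bounded_op_iff:
  "bounded_op T \<longleftrightarrow> bounded_linear T \<and> (\<forall>a x. T (scaleC a x) = scaleC a (T x))"
proof
  assume "bounded_op T"
  then show "bounded_linear T \<and> (\<forall>a x. T (scaleC a x) = scaleC a (T x))"
    unfolding bounded_op_def by (auto intro!: bounded_linear_intro simp: scaleR_scaleC)
next
  assume asm: "bounded_linear T \<and> (\<forall>a x. T (scaleC a x) = scaleC a (T x))"
  then interpret T: bounded_linear T by blast
  show "bounded_op T"
    unfolding bounded_op_def using asm T.add T.bounded by blast
qed

lemma bounded_op_add: "bounded_op S \<Longrightarrow> bounded_op T \<Longrightarrow> bounded_op (op_add S T)"
  unfolding bounded_op_iff op_add_def by (auto intro: bounded_linear_add simp: scaleC_add_right)

lemma bounded_op_scale: "bounded_op T \<Longrightarrow> bounded_op (op_scale c T)"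
  unfolding bounded_op_iff op_scale_def
  using bounded_linear_compose[OF bounded_linear_scaleC_right]
  by (auto simp: scaleC_scaleC mult.commute)

lemma bounded_op_diff: "bounded_op S \<Longrightarrow> bounded_op T \<Longrightarrow> bounded_op (op_diff S T)"
  unfolding bounded_op_iff op_diff_def
  by (auto intro: bounded_linear_sub simp: linear_diff[OF linear_scaleC_right])

lemma bounded_op_comp: "bounded_op S \<Longrightarrow> bounded_op T \<Longrightarrow> bounded_op (S \<circ> T)"
  unfolding bounded_op_iff o_def by (auto intro: bounded_linear_compose)

lemma cadjoint_eqI:
  fixes T S :: "'a::complex_inner \<Rightarrow> 'a"
  assumes "\<And>x y. cinner (T x) y = cinner x (S y)"
  shows "cadjoint T = S"
proof
  fix y
  have "\<forall>x y. cinner (T x) y = cinner x (cadjoint T y)"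
    unfolding cadjoint_def by (rule someI[of _ S]) (simp add: assms)
  then have "cinner x (cadjoint T y - S y) = 0" for x
    by (simp add: linear_diff[OF linear_cinner_right] assms)
  then have "(norm (cadjoint T y - S y))\<^sup>2 = 0"
    using cinner_self by (metis of_real_eq_0_iff)
  then show "cadjoint T y = S y"
    by simp
qed

lemma bounded_op_adjoint_exists:
  fixes T :: "'a::chilbert_space \<Rightarrow> 'a"
  assumes "bounded_op T"
  shows "\<exists>S. \<forall>x y. cinner (T x) y = cinner x (S y)"
proof -
  have "\<exists>w. \<forall>x. cinner y (T x) = cinner w x" for y
  proof -
    have "bounded_linear (\<lambda>x. cinner y (T x))"
      using assms unfolding bounded_op_iff
      by (auto intro: bounded_linear_compose[OF bounded_linear_cinner_right])
    moreover have "cinner y (T (scaleC a x)) = a * cinner y (T x)" for a x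
      using assms by (simp add: bounded_op_def cinner_scaleC_right)
    ultimately show ?thesis
      by (metis Riesz_representation_cinner)
  qed
  then obtain S where "\<And>y x. cinner y (T x) = cinner (S y) x"
    by metis
  then show ?thesis
    by (metis cinner_commute)
qed

lemma cinner_cadjoint:
  fixes T :: "'a::chilbert_space \<Rightarrow> 'a"
  assumes "bounded_op T"
  shows "cinner (T x) y = cinner x (cadjoint T y)"
proof -
  have "\<forall>x y. cinner (T x) y = cinner x (cadjoint T y)"
    unfolding cadjoint_def using bounded_op_adjoint_exists[OF assms] by (rule someI_ex)
  then show ?thesis by blast
qed

definition hermitian :: "('a::complex_inner \<Rightarrow> 'a) \<Rightarrow> bool" where
  "hermitian T \<longleftrightarrow> (\<forall>x y. cinner (T x) y = cinner x (T y))"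

lemma selfadjoint_op_iff_hermitian:
  fixes T :: "'a::chilbert_space \<Rightarrow> 'a"
  assumes "bounded_op T"
  shows "selfadjoint_op T \<longleftrightarrow> hermitian T"
proof
  show "selfadjoint_op T \<Longrightarrow> hermitian T"
    using cinner_cadjoint[OF assms] unfolding selfadjoint_op_def hermitian_def by simp
  show "hermitian T \<Longrightarrow> selfadjoint_op T"
    unfolding selfadjoint_op_def hermitian_def by (rule cadjoint_eqI) simp
qed

lemma op_Re_hermitian_combination:
  fixes B C :: "'a::complex_inner \<Rightarrow> 'a"
  assumes "hermitian B" "hermitian C"
  shows "op_Re (\<lambda>x. scaleC a (B x) + scaleC b (C x))
    = op_add (op_scale (complex_of_real (Re a)) B) (op_scale (complex_of_real (Re b)) C)"
proof -
  have "cadjoint (\<lambda>x. scaleC a (B x) + scaleC b (C x)) = (\<lambda>x. scaleC (cnj a) (B x) + scaleC (cnj b) (C x))"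
    using assms unfolding hermitian_def
    by (intro cadjoint_eqI) (simp add: cinner_add_left cinner_add_right cinner_scaleC_left cinner_scaleC_right)
  moreover have "scaleC a u + scaleC b v + (scaleC (cnj a) u + scaleC (cnj b) v)
      = scaleC (2 * complex_of_real (Re a)) u + scaleC (2 * complex_of_real (Re b)) v" for u v :: 'a
    by (simp add: ac_simps complex_add_cnj flip: scaleC_add_left)
  ultimately show ?thesis
    by (simp add: op_Re_def op_scale_def op_add_def scaleC_add_right scaleC_scaleC)
qed

lemma op_Re_rotated_hermitian_combination:
  fixes B C :: "'a::complex_inner \<Rightarrow> 'a"
  assumes "hermitian B" "hermitian C"
  shows "op_Re (op_scale e (op_add (op_scale l1 B) (op_scale l2 C)))
    = op_add (op_scale (complex_of_real (Re (e * l1))) B) (op_scale (complex_of_real (Re (e * l2))) C)"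
proof -
  have "op_scale e (op_add (op_scale l1 B) (op_scale l2 C)) = (\<lambda>x. scaleC (e * l1) (B x) + scaleC (e * l2) (C x))"
    by (simp add: op_scale_def op_add_def scaleC_add_right scaleC_scaleC)
  then show ?thesis
    using op_Re_hermitian_combination[OF assms] by simp
qed

lemma op_norm_nonneg: "is_op_norm N \<Longrightarrow> bounded_op T \<Longrightarrow> 0 \<le> N T"
  by (simp add: is_op_norm_def)

lemma op_norm_add_le: "is_op_norm N \<Longrightarrow> bounded_op S \<Longrightarrow> bounded_op T \<Longrightarrow> N (op_add S T) \<le> N S + N T"
  by (simp add: is_op_norm_def)

lemma op_norm_scale: "is_op_norm N \<Longrightarrow> bounded_op T \<Longrightarrow> N (op_scale a T) = cmod a * N T"
  by (simp add: is_op_norm_def)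

lemma op_norm_real_combination_le:
  assumes "is_op_norm N" "bounded_op B" "bounded_op C" "\<bar>p\<bar> \<le> 1" "\<bar>q\<bar> \<le> 1"
  shows "N (op_add (op_scale (complex_of_real p) B) (op_scale (complex_of_real q) C)) \<le> N B + N C"
proof -
  have "N (op_add (op_scale (complex_of_real p) B) (op_scale (complex_of_real q) C))
      \<le> N (op_scale (complex_of_real p) B) + N (op_scale (complex_of_real q) C)"
    using assms by (intro op_norm_add_le bounded_op_scale)
  also have "\<dots> = \<bar>p\<bar> * N B + \<bar>q\<bar> * N C"
    using assms by (simp add: op_norm_scale)
  also have "\<dots> \<le> N B + N C"
    using assms op_norm_nonneg by (intro add_mono mult_left_le_one_le) auto
  finally show ?thesis .
qed

lemma cSUP_cSUP_upper:
  fixes h :: "'a \<Rightarrow> 'b \<Rightarrow> 'c::conditionally_complete_lattice"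
  assumes "\<And>l t. l \<in> L \<Longrightarrow> h l t \<le> M" "l \<in> L"
  shows "h l t \<le> (SUP l\<in>L. SUP t. h l t)"
proof -
  have "h l t \<le> (SUP t. h l t)"
    using assms by (intro cSUP_upper bdd_aboveI2) auto
  also have "\<dots> \<le> (SUP l\<in>L. SUP t. h l t)"
    using assms by (intro cSUP_upper bdd_aboveI2 cSUP_least) auto
  finally show ?thesis .
qed

lemma w_Ne_ge_real_combination:
  assumes "is_op_norm N" "bounded_op B" "bounded_op C" "hermitian B" "hermitian C"
    and "p\<^sup>2 + q\<^sup>2 \<le> 1"
  shows "N (op_add (op_scale (complex_of_real p) B) (op_scale (complex_of_real q) C)) \<le> w_Ne N B C"
proof -
  have Re_le: "\<bar>Re (exp (\<i> * complex_of_real t) * l)\<bar> \<le> 1" if "(cmod l)\<^sup>2 \<le> 1" for t l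
    using abs_Re_le_cmod[of "exp (\<i> * complex_of_real t) * l"] that
    by (simp add: norm_mult abs_square_le_1)
  define h where "h l t = N (op_Re (op_scale (exp (\<i> * complex_of_real t))
    (op_add (op_scale (fst l) B) (op_scale (snd l) C))))" for l and t :: real
  have "h l t \<le> N B + N C" if "l \<in> {(l1, l2). (cmod l1)\<^sup>2 + (cmod l2)\<^sup>2 \<le> 1}" for l t
  proof -
    have "(cmod (fst l))\<^sup>2 + (cmod (snd l))\<^sup>2 \<le> 1"
      using that by (simp add: case_prod_beta)
    then have "(cmod (fst l))\<^sup>2 \<le> 1" "(cmod (snd l))\<^sup>2 \<le> 1"
      using zero_le_power2[of "cmod (fst l)"] zero_le_power2[of "cmod (snd l)"] by linarith+
    then show ?thesis
      unfolding h_def op_Re_rotated_hermitian_combination[OF assms(4,5)]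
      by (intro op_norm_real_combination_le assms(1-3) Re_le)
  qed
  moreover have "(complex_of_real p, complex_of_real q) \<in> {(l1, l2). (cmod l1)\<^sup>2 + (cmod l2)\<^sup>2 \<le> 1}"
    using assms(6) by simp
  ultimately have "h (complex_of_real p, complex_of_real q) 0 \<le> w_Ne N B C"
    unfolding w_Ne_def h_def[symmetric] by (rule cSUP_cSUP_upper)
  then show ?thesis
    unfolding h_def op_Re_rotated_hermitian_combination[OF assms(4,5)] by simp
qed

lemma w_Ne_ge_op_norm_add_scale:
  assumes "is_op_norm N" "bounded_op B" "bounded_op C" "hermitian B" "hermitian C"
  shows "N (op_add B (op_scale (complex_of_real s) C)) \<le> sqrt (1 + s\<^sup>2) * w_Ne N B C"
proof -
  define r where "r = 1 / sqrt (1 + s\<^sup>2)"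
  have "r > 0" by (simp add: r_def add_pos_nonneg)
  have "1 + s\<^sup>2 > 0"
    by (simp add: add_pos_nonneg)
  then have "r\<^sup>2 + (r * s)\<^sup>2 = 1"
    by (simp add: r_def power_divide power_mult_distrib flip: add_divide_distrib)
  have "op_add (op_scale (complex_of_real r) B) (op_scale (complex_of_real (r * s)) C)
      = op_scale (complex_of_real r) (op_add B (op_scale (complex_of_real s) C))"
    by (simp add: op_add_def op_scale_def scaleC_add_right scaleC_scaleC)
  then have "r * N (op_add B (op_scale (complex_of_real s) C)) \<le> w_Ne N B C"
    using w_Ne_ge_real_combination[OF assms \<open>r\<^sup>2 + (r * s)\<^sup>2 = 1\<close>[THEN eq_refl]] assms(1-3) \<open>r > 0\<close>
    by (simp add: op_norm_scale bounded_op_add bounded_op_scale)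
  then show ?thesis
    using \<open>r > 0\<close> by (simp add: r_def field_simps)
qed

lemma w_Ne_ge_op_norms:
  assumes "is_op_norm N" "bounded_op B" "bounded_op C" "hermitian B" "hermitian C"
  shows "N B \<le> w_Ne N B C" "N C \<le> w_Ne N B C"
    and "N (op_add B C) \<le> sqrt 2 * w_Ne N B C" "N (op_diff B C) \<le> sqrt 2 * w_Ne N B C"
proof -
  note add_scale = w_Ne_ge_op_norm_add_scale[OF assms]
  show "N B \<le> w_Ne N B C"
    using add_scale[of 0] by (simp add: op_add_def op_scale_def)
  show "N C \<le> w_Ne N B C"
    using w_Ne_ge_real_combination[OF assms, of 0 1] by (simp add: op_add_def op_scale_def scaleC_one)
  show "N (op_add B C) \<le> sqrt 2 * w_Ne N B C"
    using add_scale[of 1] by (simp add: op_add_def op_scale_def scaleC_one)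
  show "N (op_diff B C) \<le> sqrt 2 * w_Ne N B C"
    using add_scale[of "-1"]
    by (simp add: op_add_def op_diff_def op_scale_def scaleC_one linear_neg[OF linear_scaleC_left])
qed

lemma algebra_norm_add_squares_le:
  assumes "is_op_norm N" "is_algebra_norm N" "bounded_op B" "bounded_op C"
  shows "N (op_add (C \<circ> C) (B \<circ> B)) \<le> (N C)\<^sup>2 + (N B)\<^sup>2"
proof -
  have "N (op_add (C \<circ> C) (B \<circ> B)) \<le> N (C \<circ> C) + N (B \<circ> B)"
    using assms by (intro op_norm_add_le bounded_op_comp)
  also have "\<dots> \<le> N C * N C + N B * N B"
    using assms(2-4) unfolding is_algebra_norm_def by (intro add_mono) auto
  finally show ?thesis
    by (simp add: power2_eq_square)
qed

lemma eighth_plus_half_max_abs_diff_le_square: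
  fixes b c x y s w :: real
  assumes "0 \<le> b" "0 \<le> c" "b \<le> w" "c \<le> w" "0 \<le> x" "0 \<le> y"
    and "x \<le> sqrt 2 * w" "y \<le> sqrt 2 * w" "s \<le> c\<^sup>2 + b\<^sup>2"
  shows "(1/8) * s + (1/2) * max b c * \<bar>x - y\<bar> \<le> w\<^sup>2"
proof -
  have "0 \<le> w" using assms(1,3) by linarith
  have "s \<le> 2 * w\<^sup>2"
    using assms(9) power_mono[OF assms(3,1), of 2] power_mono[OF assms(4,2), of 2] by linarith
  have "max b c * \<bar>x - y\<bar> \<le> w * (sqrt 2 * w)"
    using assms by (intro mult_mono) auto
  also have "\<dots> \<le> w * ((3/2) * w)"
    using \<open>0 \<le> w\<close> by (intro mult_left_mono mult_right_mono real_le_lsqrt) (auto simp: power2_eq_square)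
  finally show ?thesis
    using \<open>s \<le> 2 * w\<^sup>2\<close> by (simp add: power2_eq_square)
qed

theorem corollary2p15:
  fixes N :: "('a::chilbert_space \<Rightarrow> 'a) \<Rightarrow> real"
    and B C :: "'a \<Rightarrow> 'a"
  assumes "is_op_norm N" and "is_algebra_norm N" and "is_selfadjoint_norm N"
    and "bounded_op B" and "bounded_op C"
    and "selfadjoint_op B" and "selfadjoint_op C"
  shows "(1/8) * N (op_add (C \<circ> C) (B \<circ> B))
           + (1/2) * max (N B) (N C) * \<bar>N (op_add B C) - N (op_diff B C)\<bar>
         \<le> (w_Ne N B C)\<^sup>2"
proof -
  have "hermitian B" "hermitian C"
    using assms(4-7) selfadjoint_op_iff_hermitian by blast+
  note w_bounds = w_Ne_ge_op_norms[OF assms(1,4,5) this]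
  have nonneg: "0 \<le> N B" "0 \<le> N C" "0 \<le> N (op_add B C)" "0 \<le> N (op_diff B C)"
    using assms(1,4,5) by (simp_all add: op_norm_nonneg bounded_op_add bounded_op_diff)
  from nonneg(1,2) w_bounds(1,2) nonneg(3,4) w_bounds(3,4) algebra_norm_add_squares_le[OF assms(1,2,4,5)]
  show ?thesis
    by (rule eighth_plus_half_max_abs_diff_le_square)
qed

end
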